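(* Let $p$ be a prime, $n\ge1$, and let $Q$ be a symmetric $n\times n$ matrix over $\mathbb{Z}_p$ whose characteristic polynomial is irreducible over $\mathbb{Z}_p$. Then the $p^n$ graph-state bases $\mathcal{B}_A$ with adjacency matrices $A\in\{\sum_{i=0}^{n-1}a_iQ^i:(a_0,\dots,a_{n-1})\in\mathbb{Z}_p^n\}$, together with the computational basis of $(\mathbb{C}^p)^{\otimes n}$, form a complete set of $p^n+1$ mutually unbiased bases of $\mathbb{C}^{p^n}$.
   Context: Let $\omega_p=e^{2\pi i/p}$. On $\mathbb{C}^p$ with computational basis $\{|0\rangle,\dots,|p-1\rangle\}$ let $|+\rangle=p^{-1/2}\sum_{k}|k\rangle$ and $Z=\sum_k\omega_p^k|k\rangle\langle k|$. On $(\mathbb{C}^p)^{\otimes n}$ define $U_{i,i}=\sum_{k=0}^{1}i^k|k\rangle\langle k|_i$ if $p=2$ and $U_{i,i}=\sum_{k=0}^{p-1}\omega_p^{k(k-1)/2}|k\rangle\langle k|_i$ if $p\ge3$, and for $i\ne j$, $U_{i,j}=\sum_{k,l}\omega_p^{kl}|k\rangle\langle k|_i\otimes|l\rangle\langle l|_j$. For a symmetric $n\times n$ matrix $A$ over $\mathbb{Z}_p$ (entries as integers in $\{0,\dots,p-1\}$), $|G_A\rangle=\prod_{i\le j}U_{i,j}^{A_{i,j}}|+\rangle^{\otimes n}$ and $\mathcal{B}_A=\{Z^{m_1}\otimes\cdots\otimes Z^{m_n}|G_A\rangle\}_{m_i\in\mathbb{Z}_p}$. The computational basis is $\{|k_1\rangle\otimes\cdots\otimes|k_n\rangle\}$.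 Bases of $\mathbb{C}^d$ are mutually unbiased if all cross overlaps have squared modulus $1/d$; a complete set consists of $d+1$ pairwise mutually unbiased bases. *)

theory Defs
  imports Complex_Main "HOL-Library.FuncSet"
    "Jordan_Normal_Form.Char_Poly" "Berlekamp_Zassenhaus.Finite_Field"
begin

(* Computational basis labels of (C^p)^{\<otimes>n}: tuples (k_0,...,k_{n-1}) with k_i < p.
   Vectors of (C^p)^{\<otimes>n} = C^{p^n} are functions on these labels (zero elsewhere). *)
definition Conf :: "nat \<Rightarrow> nat \<Rightarrow> (nat \<Rightarrow> nat) set" where
  "Conf p n = {..<n} \<rightarrow>\<^sub>E {..<p}"

definition state_space :: "nat \<Rightarrow> nat \<Rightarrow> ((nat \<Rightarrow> nat) \<Rightarrow> complex) set" where
  "state_space p n = {\<psi>. \<forall>k. k \<notin> Conf p n \<longrightarrow> \<psi> k = 0}"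

definition qinner :: "nat \<Rightarrow> nat \<Rightarrow> ((nat \<Rightarrow> nat) \<Rightarrow> complex) \<Rightarrow> ((nat \<Rightarrow> nat) \<Rightarrow> complex) \<Rightarrow> complex" where
  "qinner p n u v = (\<Sum>k\<in>Conf p n. cnj (u k) * v k)"

definition omega :: "nat \<Rightarrow> complex" where
  "omega p = cis (2 * pi / real p)"

definition uphase :: "nat \<Rightarrow> nat \<Rightarrow> nat \<Rightarrow> (nat \<Rightarrow> nat) \<Rightarrow> complex" where
  "uphase p i j k =
     (if i = j then (if p = 2 then \<i> ^ (k i) else omega p ^ (k i * (k i - 1) div 2))
      else omega p ^ (k i * k j))"

definition U_op :: "nat \<Rightarrow> nat \<Rightarrow> nat \<Rightarrow> ((nat \<Rightarrow> nat) \<Rightarrow> complex) \<Rightarrow> ((nat \<Rightarrow> nat) \<Rightarrow> complex)" where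
  "U_op p i j \<psi> = (\<lambda>k. uphase p i j k * \<psi> k)"

definition plus_state :: "nat \<Rightarrow> nat \<Rightarrow> (nat \<Rightarrow> nat) \<Rightarrow> complex" where
  "plus_state p n = (\<lambda>k. if k \<in> Conf p n then complex_of_real (1 / sqrt (real p ^ n)) else 0)"

(* |G_A> = prod_{i<=j} U_{i,j}^{A_{i,j}} |+>^{\<otimes>n}, A with entries in {0..p-1} *)
definition graph_state :: "nat \<Rightarrow> nat \<Rightarrow> (nat \<Rightarrow> nat \<Rightarrow> nat) \<Rightarrow> (nat \<Rightarrow> nat) \<Rightarrow> complex" where
  "graph_state p n A =
     foldr (\<lambda>(i, j) \<psi>. (U_op p i j ^^ A i j) \<psi>) [(i, j). i \<leftarrow> [0..<n], j \<leftarrow> [i..<n]] (plus_state p n)"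

definition Z_op :: "nat \<Rightarrow> nat \<Rightarrow> (nat \<Rightarrow> nat) \<Rightarrow> ((nat \<Rightarrow> nat) \<Rightarrow> complex) \<Rightarrow> ((nat \<Rightarrow> nat) \<Rightarrow> complex)" where
  "Z_op p n m \<psi> = (\<lambda>k. (\<Prod>i<n. omega p ^ (m i * k i)) * \<psi> k)"

definition graph_basis :: "nat \<Rightarrow> nat \<Rightarrow> (nat \<Rightarrow> nat \<Rightarrow> nat) \<Rightarrow> ((nat \<Rightarrow> nat) \<Rightarrow> complex) set" where
  "graph_basis p n A = {Z_op p n m (graph_state p n A) | m. m \<in> Conf p n}"

definition comp_basis :: "nat \<Rightarrow> nat \<Rightarrow> ((nat \<Rightarrow> nat) \<Rightarrow> complex) set" where
  "comp_basis p n = {(\<lambda>k'. if k' = k then 1 else 0) | k. k \<in> Conf p n}"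

definition is_onb :: "nat \<Rightarrow> nat \<Rightarrow> ((nat \<Rightarrow> nat) \<Rightarrow> complex) set \<Rightarrow> bool" where
  "is_onb p n B \<longleftrightarrow> B \<subseteq> state_space p n \<and> finite B \<and> card B = p ^ n \<and>
     (\<forall>u\<in>B. \<forall>v\<in>B. qinner p n u v = (if u = v then 1 else 0))"

definition mutually_unbiased :: "nat \<Rightarrow> nat \<Rightarrow> ((nat \<Rightarrow> nat) \<Rightarrow> complex) set \<Rightarrow> ((nat \<Rightarrow> nat) \<Rightarrow> complex) set \<Rightarrow> bool" where
  "mutually_unbiased p n B1 B2 \<longleftrightarrow>
     is_onb p n B1 \<and> is_onb p n B2 \<and>
     (\<forall>u\<in>B1. \<forall>v\<in>B2. (cmod (qinner p n u v))\<^sup>2 = 1 / real (p ^ n))"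

definition complete_MUB_set :: "nat \<Rightarrow> nat \<Rightarrow> ((nat \<Rightarrow> nat) \<Rightarrow> complex) set set \<Rightarrow> bool" where
  "complete_MUB_set p n S \<longleftrightarrow> card S = p ^ n + 1 \<and> (\<forall>B\<in>S. is_onb p n B) \<and>
     (\<forall>B1\<in>S. \<forall>B2\<in>S. B1 \<noteq> B2 \<longrightarrow> mutually_unbiased p n B1 B2)"

(* adjacency matrix over Z_p, entries as integers in {0..p-1} *)
definition adj :: "'p::finite mod_ring mat \<Rightarrow> nat \<Rightarrow> nat \<Rightarrow> nat" where
  "adj A i j = nat (to_int_mod_ring (A $$ (i, j)))"

definition poly_span :: "'a::comm_ring_1 mat \<Rightarrow> nat \<Rightarrow> 'a mat set" where
  "poly_span Q n = {mat n n (\<lambda>(i, j). \<Sum>l<n. a l * (Q ^\<^sub>m l) $$ (i, j)) | a. a \<in> {..<n} \<rightarrow>\<^sub>E UNIV}"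

end

theory Submission
  imports Defs
begin

text \<open>
  All amplitudes are powers of \<tau> = exp(i\<pi>/p). The overlap of two graph-state basis
  vectors with adjacency matrices A \<noteq> B is p^-n times a quadratic Gauss sum
  \<Sum>k \<tau>^q(k) whose quadratic part is B - A. Expanding its squared modulus and
  substituting k = l + h (mod p) turns it into a character sum that counts the solutions
  of (B - A) h \<equiv> 0 (mod p), so the squared modulus is p^n whenever B - A is invertible
  mod p. For A, B in the span of 1, Q, ..., Q^(n-1) we have B - A = f(Q) with f \<noteq> 0 of
  degree < n; as the characteristic polynomial of Q is irreducible, f is coprime to it,
  so f(Q) is invertible by Cayley-Hamilton. The same argument shows that the span has
  p^n elements, and every graph-state basis is unbiased to the computational basis
  because all its amplitudes have modulus p^(-n/2).
\<close>

section \<open>Roots of unity and character sums\<close>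

text \<open>Both \<omega>_p = tau p 2 and, for p = 2, the gate phase i = tau 2 1 are powers of this 2p-th root of unity.\<close>

definition tau :: "nat \<Rightarrow> int \<Rightarrow> complex" where
  "tau p x = cis (pi * of_int x / real p)"

lemma tau_add: "tau p (x + y) = tau p x * tau p y"
  unfolding tau_def by (simp add: cis_mult add_divide_distrib distrib_left)

lemma tau_0 [simp]: "tau p 0 = 1"
  unfolding tau_def by simp

lemma norm_tau [simp]: "cmod (tau p x) = 1"
  unfolding tau_def by simp

lemma cnj_tau_mult: "cnj (tau p x) * tau p y = tau p (y - x)"
  unfolding tau_def by (simp add: cis_cnj cis_mult diff_divide_distrib right_diff_distrib)

lemma tau_power: "tau p x ^ m = tau p (int m * x)"
  unfolding tau_def by (simp add: DeMoivre mult.assoc mult.left_commute)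

lemma tau_sum: "tau p (\<Sum>i\<in>I. f i) = (\<Prod>i\<in>I. tau p (f i))"
  by (induct I rule: infinite_finite_induct) (auto simp: tau_add)

lemma omega_power_eq_tau: "omega p ^ m = tau p (2 * int m)"
  unfolding omega_def tau_def by (simp add: DeMoivre field_simps)

lemma imaginary_unit_eq_tau: "\<i> = tau 2 1"
  unfolding tau_def by (simp add: cis_pi_half)

lemma tau_double_eq_1_iff:
  assumes "p > 0"
  shows "tau p (2 * c) = 1 \<longleftrightarrow> int p dvd c"
proof
  assume "tau p (2 * c) = 1"
  then have "cos (pi * of_int (2 * c) / real p) = 1"
    unfolding tau_def by (metis cis.sel(1) one_complex.sel(1))
  then obtain k :: int where "pi * of_int (2 * c) / real p = of_int k * 2 * pi"
    using cos_one_2pi_int by blast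
  then have "real_of_int c = of_int (k * int p)"
    using assms by (simp add: field_simps)
  then show "int p dvd c"
    by (simp only: of_int_eq_iff) simp
next
  assume "int p dvd c"
  then obtain t where "c = int p * t" ..
  then have "pi * of_int (2 * c) / real p = 2 * pi * of_int t"
    using assms by simp
  then show "tau p (2 * c) = 1"
    unfolding tau_def by (simp add: cis_multiple_2pi)
qed

lemma tau_cong:
  assumes "p > 0" "2 * int p dvd x - y"
  shows "tau p x = tau p y"
proof -
  obtain t where "x - y = 2 * int p * t"
    using assms(2) ..
  then have "x = y + 2 * (int p * t)"
    by simp
  then show ?thesis
    using tau_double_eq_1_iff[OF assms(1)] by (simp add: tau_add)
qed

lemma sum_tau_lessThan:
  assumes "p > 0"
  shows "(\<Sum>x<p. tau p (2 * c * int x)) = (if int p dvd c then of_nat p else 0)"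
proof -
  have powers: "tau p (2 * c * int x) = tau p (2 * c) ^ x" for x
    by (simp add: tau_power mult.commute)
  have "tau p (2 * c) ^ p = 1"
    using tau_double_eq_1_iff[OF assms, of "int p * c"] by (simp add: tau_power mult_ac)
  then show ?thesis
    using tau_double_eq_1_iff[OF assms, of c] by (simp add: powers sum_gp_strict)
qed

lemma finite_Conf [simp]: "finite (Conf p n)"
  unfolding Conf_def by (simp add: finite_PiE)

lemma card_Conf: "card (Conf p n) = p ^ n"
  unfolding Conf_def by (simp add: card_PiE)

lemma Conf_eqI:
  assumes "k \<in> Conf p n" "k' \<in> Conf p n" "\<And>i. i < n \<Longrightarrow> k i = k' i"
  shows "k = k'"
  using assms unfolding Conf_def by (metis PiE_ext lessThan_iff)

lemma sum_tau_Conf: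
  assumes "p > 0"
  shows "(\<Sum>k\<in>Conf p n. tau p (2 * (\<Sum>i<n. c i * int (k i))))
          = (if \<forall>i<n. int p dvd c i then of_nat p ^ n else 0)"
proof -
  have "(\<Sum>k\<in>Conf p n. tau p (2 * (\<Sum>i<n. c i * int (k i))))
      = (\<Sum>k\<in>Conf p n. \<Prod>i<n. tau p (2 * c i * int (k i)))"
    by (simp add: sum_distrib_left tau_sum mult.assoc)
  also have "\<dots> = (\<Prod>i<n. \<Sum>x<p. tau p (2 * c i * int x))"
    unfolding Conf_def by (subst prod_sum_PiE) auto
  also have "\<dots> = (if \<forall>i<n. int p dvd c i then of_nat p ^ n else 0)"
    using assms by (auto simp: sum_tau_lessThan)
  finally show ?thesis .
qed

section \<open>Quadratic Gauss sums\<close>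

lemma sum_square_split_diagonal:
  fixes f :: "nat \<Rightarrow> nat \<Rightarrow> 'a::comm_monoid_add"
  shows "(\<Sum>i<n. \<Sum>j<n. f i j) = (\<Sum>i<n. f i i) + (\<Sum>i<n. \<Sum>j\<in>{Suc i..<n}. f i j + f j i)"
proof (induction n)
  case (Suc n)
  have upper: "{Suc i..<Suc n} = insert n {Suc i..<n}" if "i < n" for i
    using that by auto
  have "(\<Sum>i<Suc n. \<Sum>j\<in>{Suc i..<Suc n}. f i j + f j i)
      = (\<Sum>i<n. f i n + f n i) + (\<Sum>i<n. \<Sum>j\<in>{Suc i..<n}. f i j + f j i)"
    by (simp add: upper sum.distrib ac_simps)
  then show ?case
    using Suc by (simp add: sum.distrib ac_simps)
qed simp

definition quad_form :: "nat \<Rightarrow> (nat \<Rightarrow> nat \<Rightarrow> int) \<Rightarrow> (nat \<Rightarrow> int) \<Rightarrow> (nat \<Rightarrow> int) \<Rightarrow> int" where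
  "quad_form n S L x = (\<Sum>i<n. \<Sum>j<n. S i j * x i * x j) + (\<Sum>i<n. L i * x i)"

definition symmetric_on :: "nat \<Rightarrow> (nat \<Rightarrow> nat \<Rightarrow> 'a) \<Rightarrow> bool" where
  "symmetric_on n S \<longleftrightarrow> (\<forall>i<n. \<forall>j<n. S i j = S j i)"

lemma quad_form_cong: "(\<And>i. i < n \<Longrightarrow> x i = y i) \<Longrightarrow> quad_form n S L x = quad_form n S L y"
  unfolding quad_form_def by simp

lemma quad_form_add:
  assumes "symmetric_on n S"
  shows "quad_form n S L (\<lambda>i. x i + y i)
           = quad_form n S L x + quad_form n S L y + 2 * (\<Sum>i<n. x i * (\<Sum>j<n. S i j * y j))"
proof -
  have "(\<Sum>i<n. \<Sum>j<n. S i j * y i * x j) = (\<Sum>i<n. \<Sum>j<n. S j i * y j * x i)"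
    by (rule sum.swap)
  also have "\<dots> = (\<Sum>i<n. \<Sum>j<n. S i j * x i * y j)"
    using assms unfolding symmetric_on_def by (intro sum.cong refl) (simp add: mult_ac)
  finally have "(\<Sum>i<n. \<Sum>j<n. S i j * y i * x j) = (\<Sum>i<n. \<Sum>j<n. S i j * x i * y j)" .
  then show ?thesis
    unfolding quad_form_def
    by (simp add: algebra_simps sum.distrib sum_distrib_left)
qed

lemma even_quad_form_scaled:
  assumes "symmetric_on n S" and "\<forall>i<n. even (int p * S i i + L i)"
  shows "2 * int p dvd quad_form n S L (\<lambda>i. int p * y i)"
proof -
  have split: "(\<Sum>i<n. \<Sum>j<n. S i j * y i * y j)
      = (\<Sum>i<n. S i i * y i ^ 2) + 2 * (\<Sum>i<n. \<Sum>j\<in>{Suc i..<n}. S i j * y i * y j)"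
    using assms(1) unfolding sum_square_split_diagonal[of _ n] symmetric_on_def
    by (simp add: power2_eq_square sum_distrib_left mult_ac)
  have "even (int p * S i i * y i ^ 2 + L i * y i)" if "i < n" for i
    using assms(2) that by (cases "even (y i)") (auto simp: even_add)
  then have "even (\<Sum>i<n. int p * S i i * y i ^ 2 + L i * y i)"
    by (intro dvd_sum) auto
  then obtain t where t: "(\<Sum>i<n. int p * S i i * y i ^ 2 + L i * y i) = 2 * t" ..
  have "quad_form n S L (\<lambda>i. int p * y i)
      = int p * ((\<Sum>i<n. int p * S i i * y i ^ 2 + L i * y i)
                 + 2 * int p * (\<Sum>i<n. \<Sum>j\<in>{Suc i..<n}. S i j * y i * y j))"
  proof -
    have "quad_form n S L (\<lambda>i. int p * y i)
        = int p * (int p * (\<Sum>i<n. \<Sum>j<n. S i j * y i * y j) + (\<Sum>i<n. L i * y i))"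
      unfolding quad_form_def by (simp add: sum_distrib_left algebra_simps)
    then show ?thesis
      unfolding split by (simp add: algebra_simps sum.distrib sum_distrib_left)
  qed
  then show ?thesis
    unfolding t by (simp add: algebra_simps)
qed

text \<open>The parity condition makes tau p (quad_form n S L x) depend on x only modulo p.\<close>

lemma quad_form_period:
  assumes "symmetric_on n S" and "\<forall>i<n. even (int p * S i i + L i)"
  shows "2 * int p dvd quad_form n S L (\<lambda>i. x i + int p * y i) - quad_form n S L x"
proof -
  have "quad_form n S L (\<lambda>i. x i + int p * y i) - quad_form n S L x
      = quad_form n S L (\<lambda>i. int p * y i) + 2 * int p * (\<Sum>i<n. x i * (\<Sum>j<n. S i j * y j))"
    unfolding quad_form_add[OF assms(1)] by (simp add: sum_distrib_left mult_ac)
  then show ?thesis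
    using even_quad_form_scaled[OF assms] by simp
qed

definition conf_shift :: "nat \<Rightarrow> nat \<Rightarrow> (nat \<Rightarrow> nat) \<Rightarrow> (nat \<Rightarrow> nat) \<Rightarrow> nat \<Rightarrow> nat" where
  "conf_shift p n l h = (\<lambda>i\<in>{..<n}. (l i + h i) mod p)"

lemma inj_on_conf_shift: "inj_on (conf_shift p n l) (Conf p n)"
proof
  fix h h' assume h: "h \<in> Conf p n" and h': "h' \<in> Conf p n"
    and eq: "conf_shift p n l h = conf_shift p n l h'"
  have pointwise: "h i = h' i" if "i < n" for i
  proof -
    have "[l i + h i = l i + h' i] (mod p)"
      using fun_cong[OF eq, of i] that unfolding conf_shift_def cong_def by simp
    then have "[h i = h' i] (mod p)"
      by (simp only: cong_add_lcancel_nat)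
    then show ?thesis
      using h h' that unfolding Conf_def by (auto intro: cong_less_modulus_unique_nat)
  qed
  then show "h = h'"
    using h h' by (intro Conf_eqI)
qed

lemma sum_Conf_conf_shift:
  assumes "p > 0"
  shows "(\<Sum>k\<in>Conf p n. f k) = (\<Sum>h\<in>Conf p n. f (conf_shift p n l h))"
proof -
  have "conf_shift p n l h \<in> Conf p n" for h
    using assms unfolding conf_shift_def Conf_def by auto
  then have "conf_shift p n l ` Conf p n = Conf p n"
    using endo_inj_surj[OF finite_Conf _ inj_on_conf_shift] by blast
  then show ?thesis
    using sum.reindex[OF inj_on_conf_shift[of p n l], of f] by simp
qed

lemma tau_quad_form_conf_shift:
  assumes "p > 0" and sym: "symmetric_on n S" and par: "\<forall>i<n. even (int p * S i i + L i)"
  shows "cnj (tau p (quad_form n S L (\<lambda>i. int (l i)))) * tau p (quad_form n S L (\<lambda>i. int (conf_shift p n l h i)))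
           = tau p (quad_form n S L (\<lambda>i. int (h i))) * tau p (2 * (\<Sum>i<n. int (l i) * (\<Sum>j<n. S i j * int (h j))))"
proof -
  define x where "x i = int ((l i + h i) mod p)" for i
  define y where "y i = int ((l i + h i) div p)" for i
  have lh: "(\<lambda>i. int (l i) + int (h i)) = (\<lambda>i. x i + int p * y i)"
    unfolding x_def y_def by (auto simp flip: of_nat_mult of_nat_add)
  have "quad_form n S L (\<lambda>i. int (conf_shift p n l h i)) = quad_form n S L x"
    by (rule quad_form_cong) (simp add: conf_shift_def x_def)
  also have "tau p \<dots> = tau p (quad_form n S L (\<lambda>i. int (l i) + int (h i)))"
    unfolding lh using quad_form_period[OF sym par] assms(1)
    by (intro tau_cong) (auto simp: dvd_diff_commute)
  finally show ?thesis
    by (simp add: cnj_tau_mult quad_form_add[OF sym] tau_add)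
qed

theorem norm_gauss_sum_squared:
  assumes p: "p > 0" and sym: "symmetric_on n S" and par: "\<forall>i<n. even (int p * S i i + L i)"
    and nondeg: "\<forall>h\<in>Conf p n. (\<forall>i<n. int p dvd (\<Sum>j<n. S i j * int (h j))) \<longrightarrow> (\<forall>i<n. h i = 0)"
  shows "(cmod (\<Sum>k\<in>Conf p n. tau p (quad_form n S L (\<lambda>i. int (k i)))))\<^sup>2 = real p ^ n"
proof -
  define G where "G k = tau p (quad_form n S L (\<lambda>i. int (k i)))" for k
  define zero where "zero = (\<lambda>i\<in>{..<n}. 0 :: nat)"
  have zero_Conf: "zero \<in> Conf p n"
    using p unfolding zero_def Conf_def by auto
  have kernel: "(\<forall>i<n. int p dvd (\<Sum>j<n. S i j * int (h j))) \<longleftrightarrow> h = zero" if "h \<in> Conf p n" for h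
    using that nondeg Conf_eqI[OF that zero_Conf] by (auto simp: zero_def)
  have G_zero: "G zero = 1"
    unfolding G_def quad_form_def zero_def by simp
  have "complex_of_real ((cmod (sum G (Conf p n)))\<^sup>2) = cnj (sum G (Conf p n)) * sum G (Conf p n)"
    by (metis complex_norm_square mult.commute of_real_power)
  also have "\<dots> = (\<Sum>l\<in>Conf p n. \<Sum>k\<in>Conf p n. cnj (G l) * G k)"
    by (simp add: sum_product cnj_sum)
  also have "\<dots> = (\<Sum>l\<in>Conf p n. \<Sum>h\<in>Conf p n. cnj (G l) * G (conf_shift p n l h))"
    by (rule sum.cong[OF refl], rule sum_Conf_conf_shift[OF p])
  also have "\<dots> = (\<Sum>h\<in>Conf p n. G h * (\<Sum>l\<in>Conf p n. tau p (2 * (\<Sum>i<n. (\<Sum>j<n. S i j * int (h j)) * int (l i)))))"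
    unfolding G_def tau_quad_form_conf_shift[OF p sym par]
    by (subst sum.swap) (simp add: sum_distrib_left mult_ac)
  also have "\<dots> = (\<Sum>h\<in>Conf p n. if h = zero then of_nat p ^ n else 0)"
    by (intro sum.cong refl) (simp add: sum_tau_Conf[OF p] kernel G_zero)
  also have "\<dots> = of_nat p ^ n"
    using zero_Conf by simp
  finally have "complex_of_real ((cmod (sum G (Conf p n)))\<^sup>2) = complex_of_real (real p ^ n)"
    by simp
  then show ?thesis
    unfolding G_def of_real_eq_iff .
qed

section \<open>Polynomials in a matrix acting on vectors\<close>

text \<open>Vectors are functions supported on {..<n}; poly_apply n Q f w is f(Q) w by Horner's rule.\<close>

definition mat_apply :: "nat \<Rightarrow> 'a::comm_ring_1 mat \<Rightarrow> (nat \<Rightarrow> 'a) \<Rightarrow> nat \<Rightarrow> 'a" where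
  "mat_apply n Q w = (\<lambda>i. if i < n then \<Sum>j<n. Q $$ (i, j) * w j else 0)"

definition poly_apply :: "nat \<Rightarrow> 'a::comm_ring_1 mat \<Rightarrow> 'a poly \<Rightarrow> (nat \<Rightarrow> 'a) \<Rightarrow> nat \<Rightarrow> 'a" where
  "poly_apply n Q f w = fold_coeffs (\<lambda>a v i. a * w i + mat_apply n Q v i) f (\<lambda>_. 0)"

lemma mat_apply_zero [simp]: "mat_apply n Q (\<lambda>_. 0) = (\<lambda>_. 0)"
  unfolding mat_apply_def by auto

lemma mat_apply_add: "mat_apply n Q (\<lambda>j. u j + v j) = (\<lambda>i. mat_apply n Q u i + mat_apply n Q v i)"
  unfolding mat_apply_def by (auto simp: algebra_simps sum.distrib)

lemma mat_apply_diff: "mat_apply n Q (\<lambda>j. u j - v j) = (\<lambda>i. mat_apply n Q u i - mat_apply n Q v i)"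
  unfolding mat_apply_def by (auto simp: algebra_simps sum_subtractf)

lemma mat_apply_smult: "mat_apply n Q (\<lambda>j. c * u j) = (\<lambda>i. c * mat_apply n Q u i)"
  unfolding mat_apply_def by (auto simp: algebra_simps sum_distrib_left)

lemma mat_apply_sum: "mat_apply n Q (\<lambda>j. \<Sum>k\<in>K. u k j) = (\<lambda>i. \<Sum>k\<in>K. mat_apply n Q (u k) i)"
  unfolding mat_apply_def by (rule ext) (auto simp: sum_distrib_left intro: sum.swap)

lemma funpow_mat_apply_zero: "(mat_apply n Q ^^ k) (\<lambda>_. 0) = (\<lambda>_. 0)"
  by (induction k) auto

lemma funpow_mat_apply_diff:
  "(mat_apply n Q ^^ k) (\<lambda>j. u j - v j) = (\<lambda>i. (mat_apply n Q ^^ k) u i - (mat_apply n Q ^^ k) v i)"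
  by (induction k) (auto simp: mat_apply_diff)

lemma funpow_mat_apply_smult:
  "(mat_apply n Q ^^ k) (\<lambda>j. c * u j) = (\<lambda>i. c * (mat_apply n Q ^^ k) u i)"
  by (induction k) (auto simp: mat_apply_smult)

lemma poly_apply_0 [simp]: "poly_apply n Q 0 w = (\<lambda>_. 0)"
  unfolding poly_apply_def by simp

lemma poly_apply_pCons: "poly_apply n Q (pCons a f) w = (\<lambda>i. a * w i + mat_apply n Q (poly_apply n Q f w) i)"
proof (cases "f = 0 \<and> a = 0")
  case False
  then show ?thesis
    unfolding poly_apply_def
    by (auto simp: fold_coeffs_pCons_coeff_not_0_eq fold_coeffs_pCons_not_0_0_eq)
qed auto

lemma poly_apply_1: "poly_apply n Q 1 w = w"
  unfolding one_pCons poly_apply_pCons by simp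

lemma poly_apply_add: "poly_apply n Q (f + g) w = (\<lambda>i. poly_apply n Q f w i + poly_apply n Q g w i)"
proof (induction f arbitrary: g rule: pCons_induct)
  case (pCons a f)
  show ?case
  proof (cases g rule: pCons_cases)
    case (pCons b g')
    then show ?thesis
      unfolding pCons add_pCons poly_apply_pCons pCons.IH by (auto simp: mat_apply_add algebra_simps)
  qed
qed simp

lemma poly_apply_smult: "poly_apply n Q (Polynomial.smult c f) w = (\<lambda>i. c * poly_apply n Q f w i)"
  by (induction f rule: pCons_induct) (auto simp: poly_apply_pCons mat_apply_smult algebra_simps)

lemma poly_apply_mult: "poly_apply n Q (f * g) w = poly_apply n Q f (poly_apply n Q g w)"
  by (induction f rule: pCons_induct) (simp_all add: mult_pCons_left poly_apply_add poly_apply_smult poly_apply_pCons)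

lemma poly_apply_zero_vector: "poly_apply n Q f (\<lambda>_. 0) = (\<lambda>_. 0)"
  by (induction f rule: pCons_induct) (auto simp: poly_apply_pCons)

lemma poly_apply_outside:
  assumes "\<forall>i\<ge>n. w i = 0" "i \<ge> n"
  shows "poly_apply n Q f w i = 0"
  using assms by (induction f rule: pCons_induct) (auto simp: poly_apply_pCons mat_apply_def)

lemma poly_apply_eq_sum:
  assumes "degree f < N"
  shows "poly_apply n Q f w = (\<lambda>i. \<Sum>k<N. poly.coeff f k * (mat_apply n Q ^^ k) w i)"
  using assms
proof (induction f arbitrary: N rule: pCons_induct)
  case (pCons a f)
  then obtain M where N: "N = Suc M"
    by (cases N) auto
  have "poly_apply n Q f w = (\<lambda>i. \<Sum>k<M. poly.coeff f k * (mat_apply n Q ^^ k) w i)"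
  proof (cases "f = 0")
    case False
    then show ?thesis
      using pCons N by simp
  qed simp
  then show ?case
    unfolding N poly_apply_pCons sum.lessThan_Suc_shift
    by (simp add: mat_apply_sum mat_apply_smult)
qed simp

text \<open>Coefficientwise form of (tI - Q) adj(tI - Q) = \<chi>_Q(t) I.\<close>

lemma adj_char_poly_matrix_coeff:
  fixes Q :: "'a::comm_ring_1 mat"
  assumes Q: "Q \<in> carrier_mat n n" and ij: "i < n" "j < n"
  defines "M \<equiv> adj_mat (char_poly_matrix Q)"
  shows "(if k = 0 then 0 else poly.coeff (M $$ (i, j)) (k - 1))
           - (\<Sum>l<n. Q $$ (i, l) * poly.coeff (M $$ (l, j)) k)
         = (if i = j then poly.coeff (char_poly Q) k else 0)"
proof -
  have N: "char_poly_matrix Q \<in> carrier_mat n n"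
    using Q by simp
  have M: "M \<in> carrier_mat n n" and NM: "char_poly_matrix Q * M = char_poly Q \<cdot>\<^sub>m 1\<^sub>m n"
    using adj_mat[OF N] unfolding M_def char_poly_def by auto
  have "(char_poly_matrix Q * M) $$ (i, j) = (\<Sum>l<n. char_poly_matrix Q $$ (i, l) * M $$ (l, j))"
    using N M ij by (simp add: scalar_prod_def atLeast0LessThan)
  then have product: "(\<Sum>l<n. char_poly_matrix Q $$ (i, l) * M $$ (l, j)) = (if i = j then char_poly Q else 0)"
    using ij unfolding NM by (auto split: if_splits)
  have entry: "poly.coeff (char_poly_matrix Q $$ (i, l) * M $$ (l, j)) k
      = (if i = l then (if k = 0 then 0 else poly.coeff (M $$ (l, j)) (k - 1)) else 0)
        - Q $$ (i, l) * poly.coeff (M $$ (l, j)) k" if "l < n" for l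
  proof -
    have "char_poly_matrix Q $$ (i, l) * M $$ (l, j)
        = (if i = l then pCons 0 (M $$ (l, j)) else 0) + Polynomial.smult (- Q $$ (i, l)) (M $$ (l, j))"
      using Q ij that by (simp add: char_poly_matrix_def distrib_right)
    then show ?thesis
      by (cases k) auto
  qed
  have "(if i = j then poly.coeff (char_poly Q) k else 0)
      = (\<Sum>l<n. poly.coeff (char_poly_matrix Q $$ (i, l) * M $$ (l, j)) k)"
    unfolding coeff_sum[symmetric] product by simp
  also have "\<dots> = (\<Sum>l<n. (if i = l then (if k = 0 then 0 else poly.coeff (M $$ (l, j)) (k - 1)) else 0)
                       - Q $$ (i, l) * poly.coeff (M $$ (l, j)) k)"
    by (intro sum.cong refl) (simp add: entry)
  finally show ?thesis
    using ij by (simp add: sum_subtractf)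
qed

text \<open>adj_coeff_vec n Q w k = M_k w, where adj(tI - Q) = \<Sum>k t^k M_k.\<close>

definition adj_coeff_vec :: "nat \<Rightarrow> 'a::comm_ring_1 mat \<Rightarrow> (nat \<Rightarrow> 'a) \<Rightarrow> nat \<Rightarrow> nat \<Rightarrow> 'a" where
  "adj_coeff_vec n Q w k =
     (\<lambda>l. if l < n then \<Sum>j<n. poly.coeff (adj_mat (char_poly_matrix Q) $$ (l, j)) k * w j else 0)"

lemma char_poly_coeff_vec:
  fixes Q :: "'a::comm_ring_1 mat"
  assumes Q: "Q \<in> carrier_mat n n" and w: "\<forall>i\<ge>n. w i = 0"
  defines "W \<equiv> adj_coeff_vec n Q w"
  shows "(\<lambda>i. poly.coeff (char_poly Q) k * w i) = (\<lambda>i. (if k = 0 then 0 else W (k - 1) i) - mat_apply n Q (W k) i)"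
proof
  fix i
  define M where "M = adj_mat (char_poly_matrix Q)"
  show "poly.coeff (char_poly Q) k * w i = (if k = 0 then 0 else W (k - 1) i) - mat_apply n Q (W k) i"
  proof (cases "i < n")
    case True
    have "poly.coeff (char_poly Q) k * w i = (\<Sum>j<n. (if i = j then poly.coeff (char_poly Q) k else 0) * w j)"
      using True by (simp add: if_distrib[of "\<lambda>x. x * _"] cong: if_cong)
    also have "\<dots> = (\<Sum>j<n. ((if k = 0 then 0 else poly.coeff (M $$ (i, j)) (k - 1))
                        - (\<Sum>l<n. Q $$ (i, l) * poly.coeff (M $$ (l, j)) k)) * w j)"
      using adj_char_poly_matrix_coeff[OF Q True] unfolding M_def by simp
    also have "\<dots> = (\<Sum>j<n. (if k = 0 then 0 else poly.coeff (M $$ (i, j)) (k - 1)) * w j)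
                     - (\<Sum>j<n. \<Sum>l<n. Q $$ (i, l) * poly.coeff (M $$ (l, j)) k * w j)"
      by (simp add: left_diff_distrib sum_subtractf sum_distrib_right)
    also have "(\<Sum>j<n. \<Sum>l<n. Q $$ (i, l) * poly.coeff (M $$ (l, j)) k * w j)
               = (\<Sum>l<n. \<Sum>j<n. Q $$ (i, l) * poly.coeff (M $$ (l, j)) k * w j)"
      by (rule sum.swap)
    finally show ?thesis
      using True by (simp add: W_def M_def adj_coeff_vec_def mat_apply_def sum_distrib_left mult.assoc)
  qed (use w in \<open>simp add: W_def adj_coeff_vec_def mat_apply_def\<close>)
qed

lemma sum_funpow_char_poly_coeff_vec:
  fixes Q :: "'a::comm_ring_1 mat"
  assumes Q: "Q \<in> carrier_mat n n" and w: "\<forall>i\<ge>n. w i = 0"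
  shows "(\<Sum>k<Suc m. (mat_apply n Q ^^ k) (\<lambda>i. poly.coeff (char_poly Q) k * w i) i)
           = - (mat_apply n Q ^^ Suc m) (adj_coeff_vec n Q w m) i"
proof (induction m)
  case 0
  show ?case
    by (subst char_poly_coeff_vec[OF Q w]) simp
next
  case (Suc m)
  let ?W = "adj_coeff_vec n Q w"
  have "(mat_apply n Q ^^ Suc m) (\<lambda>i. poly.coeff (char_poly Q) (Suc m) * w i) i
      = (mat_apply n Q ^^ Suc m) (?W m) i - (mat_apply n Q ^^ Suc m) (mat_apply n Q (?W (Suc m))) i"
    by (subst char_poly_coeff_vec[OF Q w]) (simp add: funpow_mat_apply_diff mat_apply_diff)
  also have "(mat_apply n Q ^^ Suc m) (mat_apply n Q (?W (Suc m))) = (mat_apply n Q ^^ Suc (Suc m)) (?W (Suc m))"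
    by (simp only: funpow_swap1 funpow.simps(2) comp_def)
  finally show ?case
    using Suc by simp
qed

lemma poly_apply_char_poly:
  fixes Q :: "'a::comm_ring_1 mat"
  assumes Q: "Q \<in> carrier_mat n n" and w: "\<forall>i\<ge>n. w i = 0"
  shows "poly_apply n Q (char_poly Q) w = (\<lambda>_. 0)"
proof
  fix i
  define M where "M = adj_mat (char_poly_matrix Q)"
  define D where "D = degree (char_poly Q) + (\<Sum>l<n. \<Sum>j<n. degree (M $$ (l, j)))"
  have "degree (M $$ (l, j)) \<le> D" if "l < n" "j < n" for l j
  proof -
    have "degree (M $$ (l, j)) \<le> (\<Sum>j<n. degree (M $$ (l, j)))"
      using that by (intro member_le_sum) auto
    also have "\<dots> \<le> (\<Sum>l<n. \<Sum>j<n. degree (M $$ (l, j)))"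
      using that by (intro member_le_sum[where f="\<lambda>l. \<Sum>j<n. degree (M $$ (l, j))"]) auto
    finally show ?thesis
      unfolding D_def by simp
  qed
  then have W_vanish: "adj_coeff_vec n Q w (Suc D) = (\<lambda>_. 0)"
    unfolding adj_coeff_vec_def M_def[symmetric] by (auto intro!: sum.neutral simp: coeff_eq_0 le_imp_less_Suc)
  have "degree (char_poly Q) < Suc (Suc D)"
    unfolding D_def by simp
  then have "poly_apply n Q (char_poly Q) w i
      = (\<Sum>k<Suc (Suc D). (mat_apply n Q ^^ k) (\<lambda>i. poly.coeff (char_poly Q) k * w i) i)"
    by (simp add: poly_apply_eq_sum funpow_mat_apply_smult)
  also have "\<dots> = 0"
    unfolding sum_funpow_char_poly_coeff_vec[OF Q w] W_vanish funpow_mat_apply_zero by simp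
  finally show "poly_apply n Q (char_poly Q) w i = 0" .
qed

lemma poly_apply_eq_0_imp_zero:
  fixes Q :: "'a::field_gcd mat"
  assumes Q: "Q \<in> carrier_mat n n" and irr: "irreducible (char_poly Q)"
    and f: "f \<noteq> 0" "degree f < n"
    and w: "\<forall>i\<ge>n. w i = 0" and fw: "poly_apply n Q f w = (\<lambda>_. 0)"
  shows "w = (\<lambda>_. 0)"
proof -
  have "\<not> char_poly Q dvd f"
    using dvd_imp_degree_le[of "char_poly Q" f] f degree_monic_char_poly[OF Q] by auto
  then have "coprime (char_poly Q) f"
    using irr by (intro prime_elem_imp_coprime irreducible_imp_prime_elem)
  then obtain s t where st: "s * char_poly Q + t * f = 1"
    by (metis bezout_coefficients_fst_snd coprime_iff_gcd_eq_1)
  have "w = poly_apply n Q (s * char_poly Q + t * f) w"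
    by (simp add: st poly_apply_1)
  also have "\<dots> = (\<lambda>_. 0)"
    by (simp add: poly_apply_add poly_apply_mult poly_apply_char_poly[OF Q w] fw poly_apply_zero_vector)
  finally show ?thesis .
qed

section \<open>The span of the powers of Q\<close>

definition poly_comb :: "'a::comm_ring_1 mat \<Rightarrow> nat \<Rightarrow> (nat \<Rightarrow> 'a) \<Rightarrow> 'a mat" where
  "poly_comb Q n a = mat n n (\<lambda>(i, j). \<Sum>l<n. a l * (Q ^\<^sub>m l) $$ (i, j))"

lemma poly_span_eq_image: "poly_span Q n = poly_comb Q n ` ({..<n} \<rightarrow>\<^sub>E UNIV)"
  unfolding poly_span_def poly_comb_def by auto

definition poly_of_coeffs :: "nat \<Rightarrow> (nat \<Rightarrow> 'a::comm_ring_1) \<Rightarrow> 'a poly" where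
  "poly_of_coeffs n a = (\<Sum>l<n. Polynomial.monom (a l) l)"

lemma coeff_poly_of_coeffs: "poly.coeff (poly_of_coeffs n a) k = (if k < n then a k else 0)"
  unfolding poly_of_coeffs_def by (simp add: coeff_sum coeff_monom)

lemma degree_poly_of_coeffs:
  assumes "n \<ge> 1"
  shows "degree (poly_of_coeffs n a) < n"
proof -
  have "degree (poly_of_coeffs n a) \<le> n - 1"
    by (rule degree_le) (auto simp: coeff_poly_of_coeffs)
  then show ?thesis
    using assms by simp
qed

lemma sum_pow_mat_eq_funpow:
  fixes Q :: "'a::comm_ring_1 mat"
  assumes Q: "Q \<in> carrier_mat n n" and i: "i < n"
  shows "(\<Sum>j<n. (Q ^\<^sub>m l) $$ (i, j) * w j) = (mat_apply n Q ^^ l) w i"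
  using i
proof (induction l arbitrary: i w)
  case 0
  then show ?case
    using Q by (simp add: if_distrib[of "\<lambda>x. x * _"] cong: if_cong)
next
  case (Suc l)
  have "(\<Sum>j<n. (Q ^\<^sub>m Suc l) $$ (i, j) * w j) = (\<Sum>j<n. \<Sum>t<n. (Q ^\<^sub>m l) $$ (i, t) * Q $$ (t, j) * w j)"
    using Q Suc.prems by (simp add: scalar_prod_def atLeast0LessThan sum_distrib_right)
  also have "\<dots> = (\<Sum>t<n. \<Sum>j<n. (Q ^\<^sub>m l) $$ (i, t) * Q $$ (t, j) * w j)"
    by (rule sum.swap)
  also have "\<dots> = (\<Sum>t<n. (Q ^\<^sub>m l) $$ (i, t) * mat_apply n Q w t)"
    by (simp add: mat_apply_def sum_distrib_left mult.assoc)
  also have "\<dots> = (mat_apply n Q ^^ Suc l) w i"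
    using Suc by (simp add: funpow_swap1)
  finally show ?case .
qed

lemma poly_comb_apply:
  fixes Q :: "'a::comm_ring_1 mat"
  assumes Q: "Q \<in> carrier_mat n n" and i: "i < n"
  shows "(\<Sum>j<n. poly_comb Q n a $$ (i, j) * w j) = poly_apply n Q (poly_of_coeffs n a) w i"
proof -
  have "(\<Sum>j<n. poly_comb Q n a $$ (i, j) * w j) = (\<Sum>j<n. \<Sum>l<n. a l * ((Q ^\<^sub>m l) $$ (i, j) * w j))"
    using i by (simp add: poly_comb_def sum_distrib_right mult.assoc)
  also have "\<dots> = (\<Sum>l<n. a l * (mat_apply n Q ^^ l) w i)"
    by (subst sum.swap) (simp add: sum_distrib_left[symmetric] sum_pow_mat_eq_funpow[OF Q i])
  also have "\<dots> = poly_apply n Q (poly_of_coeffs n a) w i"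
    using i by (simp add: poly_apply_eq_sum[of _ n] degree_poly_of_coeffs coeff_poly_of_coeffs)
  finally show ?thesis .
qed

lemma pow_mat_Suc_left:
  fixes Q :: "'a::semiring_1 mat"
  assumes "Q \<in> carrier_mat n n"
  shows "Q ^\<^sub>m Suc l = Q * Q ^\<^sub>m l"
proof (induction l)
  case (Suc l)
  have "Q ^\<^sub>m Suc (Suc l) = (Q * Q ^\<^sub>m l) * Q"
    using Suc by simp
  also have "\<dots> = Q * (Q ^\<^sub>m l * Q)"
    using assms by (intro assoc_mult_mat) auto
  finally show ?case
    by simp
qed (use assms in simp)

lemma transpose_pow_mat:
  fixes Q :: "'a::comm_semiring_1 mat"
  assumes Q: "Q \<in> carrier_mat n n" and sym: "transpose_mat Q = Q"
  shows "transpose_mat (Q ^\<^sub>m l) = Q ^\<^sub>m l"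
proof (induction l)
  case (Suc l)
  have "transpose_mat (Q ^\<^sub>m l * Q) = transpose_mat Q * transpose_mat (Q ^\<^sub>m l)"
    using Q by (intro transpose_mult) auto
  then show ?case
    using Suc sym pow_mat_Suc_left[OF Q] by simp
qed (use Q in simp)

lemma poly_comb_symmetric:
  fixes Q :: "'a::comm_ring_1 mat"
  assumes Q: "Q \<in> carrier_mat n n" and sym: "transpose_mat Q = Q" and ij: "i < n" "j < n"
  shows "poly_comb Q n a $$ (i, j) = poly_comb Q n a $$ (j, i)"
proof -
  have "(Q ^\<^sub>m l) $$ (i, j) = (Q ^\<^sub>m l) $$ (j, i)" for l
    using arg_cong[OF transpose_pow_mat[OF Q sym, of l], of "\<lambda>B. B $$ (j, i)"] Q ij by simp
  then show ?thesis
    unfolding poly_comb_def using ij by simp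
qed

lemma poly_comb_diff:
  assumes "i < n" "j < n"
  shows "poly_comb Q n a $$ (i, j) - poly_comb Q n b $$ (i, j) = poly_comb Q n (\<lambda>l. a l - b l) $$ (i, j)"
  using assms by (simp add: poly_comb_def algebra_simps sum_subtractf)

lemma poly_comb_kernel:
  fixes Q :: "'a::field_gcd mat"
  assumes Q: "Q \<in> carrier_mat n n" and irr: "irreducible (char_poly Q)" and n: "n \<ge> 1"
    and a: "l < n" "a l \<noteq> 0"
    and w: "\<forall>i\<ge>n. w i = 0" and kernel: "\<forall>i<n. (\<Sum>j<n. poly_comb Q n a $$ (i, j) * w j) = 0"
  shows "w = (\<lambda>_. 0)"
proof (rule poly_apply_eq_0_imp_zero[OF Q irr _ degree_poly_of_coeffs[OF n] w])
  show "poly_of_coeffs n a \<noteq> 0"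
    using a coeff_poly_of_coeffs[of n a l] by auto
  show "poly_apply n Q (poly_of_coeffs n a) w = (\<lambda>_. 0)"
  proof
    fix i
    show "poly_apply n Q (poly_of_coeffs n a) w i = 0"
      using kernel poly_comb_apply[OF Q] poly_apply_outside[OF w] by (cases "i < n") auto
  qed
qed

lemma PiE_lessThan_neqE:
  assumes "a \<in> {..<n} \<rightarrow>\<^sub>E UNIV" "b \<in> {..<n} \<rightarrow>\<^sub>E UNIV" "a \<noteq> b"
  obtains l where "l < n" "a l \<noteq> b l"
  using assms by (metis PiE_ext lessThan_iff)

lemma inj_on_poly_comb:
  fixes Q :: "'a::field_gcd mat"
  assumes Q: "Q \<in> carrier_mat n n" and irr: "irreducible (char_poly Q)" and n: "n \<ge> 1"
  shows "inj_on (poly_comb Q n) ({..<n} \<rightarrow>\<^sub>E UNIV)"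
proof (rule inj_onI, rule ccontr)
  fix a b
  assume a: "a \<in> {..<n} \<rightarrow>\<^sub>E UNIV" and b: "b \<in> {..<n} \<rightarrow>\<^sub>E UNIV"
    and eq: "poly_comb Q n a = poly_comb Q n b" and "a \<noteq> b"
  then obtain l where l: "l < n" "a l - b l \<noteq> 0"
    by (auto elim: PiE_lessThan_neqE)
  define w :: "nat \<Rightarrow> 'a" where "w i = (if i < n then 1 else 0)" for i
  have "\<forall>i<n. (\<Sum>j<n. poly_comb Q n (\<lambda>l. a l - b l) $$ (i, j) * w j) = 0"
    using eq by (simp flip: poly_comb_diff)
  then have "w = (\<lambda>_. 0)"
    using poly_comb_kernel[where a="\<lambda>l. a l - b l", OF Q irr n l] by (simp add: w_def)
  then have "w 0 = 0"
    by simp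
  then show False
    using n by (simp add: w_def)
qed

lemma card_poly_span:
  fixes Q :: "'a::{field_gcd, finite} mat"
  assumes "Q \<in> carrier_mat n n" and "irreducible (char_poly Q)" and "n \<ge> 1"
  shows "card (poly_span Q n) = CARD('a) ^ n"
  unfolding poly_span_eq_image using inj_on_poly_comb[OF assms]
  by (simp add: card_image card_PiE)

lemma of_nat_adj: "of_nat (adj A i j) = (A $$ (i, j) :: 'p::prime_card mod_ring)"
proof -
  have "0 \<le> to_int_mod_ring (A $$ (i, j))"
    using range_to_int_mod_ring[where 'a='p] by auto
  then show ?thesis
    unfolding adj_def by (simp add: of_int_of_int_mod_ring)
qed

lemma adj_poly_span_symmetric:
  fixes Q :: "'p::prime_card mod_ring mat"
  assumes "Q \<in> carrier_mat n n" "transpose_mat Q = Q" "A \<in> poly_span Q n"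
  shows "symmetric_on n (adj A)"
proof -
  obtain a where "A = poly_comb Q n a"
    using assms(3) unfolding poly_span_eq_image by auto
  then show ?thesis
    unfolding symmetric_on_def adj_def using poly_comb_symmetric[OF assms(1,2)] by simp
qed

lemma adj_diff_nondegenerate:
  fixes Q :: "'p::prime_card mod_ring mat"
  assumes Q: "Q \<in> carrier_mat n n" and irr: "irreducible (char_poly Q)" and n: "n \<ge> 1"
    and A: "A \<in> poly_span Q n" and B: "B \<in> poly_span Q n" and "A \<noteq> B"
    and h: "h \<in> Conf CARD('p) n"
    and dvd: "\<forall>i<n. int CARD('p) dvd (\<Sum>j<n. (int (adj B i j) - int (adj A i j)) * int (h j))"
  shows "\<forall>i<n. h i = 0"
proof -
  obtain a b where a: "a \<in> {..<n} \<rightarrow>\<^sub>E UNIV" "A = poly_comb Q n a"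
    and b: "b \<in> {..<n} \<rightarrow>\<^sub>E UNIV" "B = poly_comb Q n b"
    using A B unfolding poly_span_eq_image by auto
  then obtain l where l: "l < n" "b l - a l \<noteq> 0"
    using \<open>A \<noteq> B\<close> by (metis PiE_lessThan_neqE right_minus_eq)
  define w :: "nat \<Rightarrow> 'p mod_ring" where "w i = (if i < n then of_nat (h i) else 0)" for i
  have kernel: "(\<Sum>j<n. poly_comb Q n (\<lambda>l. b l - a l) $$ (i, j) * w j) = 0" if i: "i < n" for i
  proof -
    obtain t where t: "(\<Sum>j<n. (int (adj B i j) - int (adj A i j)) * int (h j)) = int CARD('p) * t"
      using dvd i by blast
    have "(\<Sum>j<n. poly_comb Q n (\<lambda>l. b l - a l) $$ (i, j) * w j)
        = of_int (\<Sum>j<n. (int (adj B i j) - int (adj A i j)) * int (h j))"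
      using i by (simp add: w_def a b of_nat_adj flip: poly_comb_diff)
    also have "\<dots> = 0"
      unfolding t by (simp only: of_int_mult of_int_of_nat_eq of_nat_card_eq_0 mult_zero_left)
    finally show ?thesis .
  qed
  have w0: "w = (\<lambda>_. 0)"
    using poly_comb_kernel[where a="\<lambda>l. b l - a l", OF Q irr n l] kernel by (simp add: w_def)
  have divisible: "CARD('p) dvd h i" if "i < n" for i
  proof (rule of_nat_0_mod_ring_dvd)
    show "(of_nat (h i) :: 'p mod_ring) = 0"
      using fun_cong[OF w0, of i] that by (simp add: w_def)
  qed
  have small: "h i < CARD('p)" if "i < n" for i
    using h that unfolding Conf_def by auto
  show ?thesis
  proof (intro allI impI)
    fix i
    assume "i < n"
    then have "CARD('p) dvd h i" "h i < CARD('p)"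
      by (simp_all add: divisible small)
    then show "h i = 0"
      using dvd_imp_le not_le by blast
  qed
qed

section \<open>Graph states\<close>

lemma prod_list_concat: "prod_list (concat xss) = prod_list (map prod_list xss)"
  by (induction xss) auto

lemma prod_list_upper_pairs:
  "prod_list (map f [(i, j). i \<leftarrow> [0..<n], j \<leftarrow> [i..<n]]) = (\<Prod>i<n. \<Prod>j\<in>{i..<n}. f (i, j))"
  by (simp add: prod_list_concat map_concat comp_def prod.distinct_set_conv_list[symmetric] atLeast0LessThan)

lemma graph_state_eq_prod:
  "graph_state p n A = (\<lambda>k. (\<Prod>i<n. \<Prod>j\<in>{i..<n}. uphase p i j k ^ A i j) * plus_state p n k)"
proof -
  have "(U_op p i j ^^ m) \<psi> = (\<lambda>k. uphase p i j k ^ m * \<psi> k)" for i j m \<psi>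
    by (induction m) (auto simp: U_op_def)
  then have "foldr (\<lambda>(i, j) \<psi>. (U_op p i j ^^ A i j) \<psi>) xs \<psi>
      = (\<lambda>k. prod_list (map (\<lambda>(i, j). uphase p i j k ^ A i j) xs) * \<psi> k)" for xs \<psi>
    by (induction xs) auto
  then show ?thesis
    unfolding graph_state_def by (simp add: prod_list_upper_pairs)
qed

text \<open>
  The diagonal gate contributes \<omega>_p^(k(k-1)/2) = \<tau>^(k^2 - k) for odd p, and i^k = \<tau>^k = \<tau>^(k^2)
  for p = 2 because k \<in> {0, 1}; either way it is \<tau>^(k^2 - eps p * k).
\<close>

definition eps :: "nat \<Rightarrow> int" where
  "eps p = (if p = 2 then 0 else 1)"

definition graph_phase :: "nat \<Rightarrow> nat \<Rightarrow> (nat \<Rightarrow> nat \<Rightarrow> nat) \<Rightarrow> (nat \<Rightarrow> nat) \<Rightarrow> int" where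
  "graph_phase p n A k = (\<Sum>i<n. int (A i i) * (int (k i) ^ 2 - eps p * int (k i))
      + (\<Sum>j\<in>{Suc i..<n}. 2 * int (A i j) * int (k i) * int (k j)))"

lemma uphase_diag_power:
  assumes "prime p" "k i < p"
  shows "uphase p i i k ^ m = tau p (int m * (int (k i) ^ 2 - eps p * int (k i)))"
proof (cases "p = 2")
  case True
  then have "k i = 0 \<or> k i = 1"
    using assms(2) by auto
  then show ?thesis
    using True by (auto simp: uphase_def eps_def imaginary_unit_eq_tau tau_power)
next
  case False
  have "int (2 * (k i * (k i - 1) div 2)) = int (k i) ^ 2 - int (k i)"
    by (cases "k i") (simp_all add: power2_eq_square algebra_simps)
  then show ?thesis
    using False by (simp add: uphase_def eps_def omega_power_eq_tau tau_power)
qed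

lemma uphase_offdiag_power: "i \<noteq> j \<Longrightarrow> uphase p i j k ^ m = tau p (2 * int m * int (k i) * int (k j))"
  by (simp add: uphase_def omega_power_eq_tau tau_power mult_ac)

lemma graph_state_Conf:
  assumes p: "prime p" and k: "k \<in> Conf p n"
  shows "graph_state p n A k = complex_of_real (1 / sqrt (real p ^ n)) * tau p (graph_phase p n A k)"
proof -
  have "(\<Prod>j\<in>{i..<n}. uphase p i j k ^ A i j)
      = tau p (int (A i i) * (int (k i) ^ 2 - eps p * int (k i))
               + (\<Sum>j\<in>{Suc i..<n}. 2 * int (A i j) * int (k i) * int (k j)))" if "i < n" for i
  proof -
    have "{i..<n} = insert i {Suc i..<n}"
      using that by auto
    moreover have "k i < p"
      using k that unfolding Conf_def by auto
    ultimately show ?thesis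
      using p by (simp add: uphase_diag_power uphase_offdiag_power tau_add tau_sum)
  qed
  then show ?thesis
    using k by (simp add: graph_state_eq_prod plus_state_def graph_phase_def tau_sum mult.commute)
qed

lemma graph_state_notin_Conf: "k \<notin> Conf p n \<Longrightarrow> graph_state p n A k = 0"
  by (simp add: graph_state_eq_prod plus_state_def)

lemma Z_op_eq_tau: "Z_op p n m \<psi> k = tau p (2 * (\<Sum>i<n. int (m i) * int (k i))) * \<psi> k"
  unfolding Z_op_def by (simp add: omega_power_eq_tau tau_sum sum_distrib_left mult.assoc)

section \<open>Graph-state bases and the computational basis\<close>

definition graph_vec :: "nat \<Rightarrow> nat \<Rightarrow> (nat \<Rightarrow> nat \<Rightarrow> nat) \<Rightarrow> (nat \<Rightarrow> nat) \<Rightarrow> (nat \<Rightarrow> nat) \<Rightarrow> complex" where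
  "graph_vec p n A m = Z_op p n m (graph_state p n A)"

lemma graph_basis_eq_image: "graph_basis p n A = graph_vec p n A ` Conf p n"
  unfolding graph_basis_def graph_vec_def by auto

lemma graph_vec_Conf:
  assumes "prime p" "k \<in> Conf p n"
  shows "graph_vec p n A m k
           = complex_of_real (1 / sqrt (real p ^ n)) * tau p (graph_phase p n A k + 2 * (\<Sum>i<n. int (m i) * int (k i)))"
  using assms unfolding graph_vec_def Z_op_eq_tau by (simp add: graph_state_Conf tau_add mult_ac)

lemma graph_vec_notin_Conf: "k \<notin> Conf p n \<Longrightarrow> graph_vec p n A m k = 0"
  unfolding graph_vec_def Z_op_eq_tau by (simp add: graph_state_notin_Conf)

lemma qinner_graph_vec:
  assumes p: "prime p"
  shows "qinner p n (graph_vec p n A m) (graph_vec p n B m') = complex_of_real (1 / real p ^ n) *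
    (\<Sum>k\<in>Conf p n. tau p (graph_phase p n B k - graph_phase p n A k + 2 * (\<Sum>i<n. (int (m' i) - int (m i)) * int (k i))))"
proof -
  define c where "c = complex_of_real (1 / sqrt (real p ^ n))"
  have "p > 0"
    using p prime_gt_0_nat by blast
  then have c: "cnj c * c = complex_of_real (1 / real p ^ n)"
    unfolding c_def by (simp flip: of_real_mult add: real_sqrt_mult[symmetric])
  have "cnj (graph_vec p n A m k) * graph_vec p n B m' k = complex_of_real (1 / real p ^ n) *
      tau p (graph_phase p n B k - graph_phase p n A k + 2 * (\<Sum>i<n. (int (m' i) - int (m i)) * int (k i)))"
    if "k \<in> Conf p n" for k
  proof -
    have "cnj (graph_vec p n A m k) * graph_vec p n B m' k
        = (cnj c * c) * (cnj (tau p (graph_phase p n A k + 2 * (\<Sum>i<n. int (m i) * int (k i))))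
                         * tau p (graph_phase p n B k + 2 * (\<Sum>i<n. int (m' i) * int (k i))))"
      using that p unfolding c_def by (simp add: graph_vec_Conf mult_ac)
    then show ?thesis
      unfolding c cnj_tau_mult by (simp add: algebra_simps sum_subtractf)
  qed
  then show ?thesis
    unfolding qinner_def sum_distrib_left by (rule sum.cong[OF refl])
qed

lemma Conf_eq_iff_dvd:
  assumes "m \<in> Conf p n" "m' \<in> Conf p n"
  shows "(\<forall>i<n. int p dvd int (m' i) - int (m i)) \<longleftrightarrow> m = m'"
proof
  assume dvd: "\<forall>i<n. int p dvd int (m' i) - int (m i)"
  have "m i = m' i" if "i < n" for i
  proof -
    have "m i < p" "m' i < p"
      using assms that unfolding Conf_def by auto
    then show ?thesis
      using dvd that by (metis cong_iff_dvd_diff cong_int_iff cong_less_modulus_unique_nat)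
  qed
  then show "m = m'"
    using assms by (intro Conf_eqI)
qed simp

lemma qinner_graph_vec_same:
  assumes p: "prime p" and m: "m \<in> Conf p n" and m': "m' \<in> Conf p n"
  shows "qinner p n (graph_vec p n A m) (graph_vec p n A m') = (if m = m' then 1 else 0)"
proof -
  have "p > 0"
    using p prime_gt_0_nat by blast
  then show ?thesis
    unfolding qinner_graph_vec[OF p]
    by (simp add: sum_tau_Conf Conf_eq_iff_dvd[OF m m'])
qed

lemma is_onb_graph_basis:
  assumes p: "prime p"
  shows "is_onb p n (graph_basis p n A)"
proof -
  have inj: "inj_on (graph_vec p n A) (Conf p n)"
  proof
    fix m m' assume "m \<in> Conf p n" "m' \<in> Conf p n" "graph_vec p n A m = graph_vec p n A m'"
    then show "m = m'"
      using qinner_graph_vec_same[OF p] by (metis zero_neq_one)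
  qed
  show ?thesis
    unfolding is_onb_def graph_basis_eq_image
  proof (intro conjI ballI)
    show "graph_vec p n A ` Conf p n \<subseteq> state_space p n"
      unfolding state_space_def using graph_vec_notin_Conf by auto
    show "card (graph_vec p n A ` Conf p n) = p ^ n"
      using card_image[OF inj] card_Conf by simp
    fix u v assume "u \<in> graph_vec p n A ` Conf p n" "v \<in> graph_vec p n A ` Conf p n"
    then obtain m m' where "m \<in> Conf p n" "u = graph_vec p n A m" "m' \<in> Conf p n" "v = graph_vec p n A m'"
      by blast
    then show "qinner p n u v = (if u = v then 1 else 0)"
      using qinner_graph_vec_same[OF p] inj_onD[OF inj] by auto
  qed simp
qed

definition basis_vec :: "(nat \<Rightarrow> nat) \<Rightarrow> (nat \<Rightarrow> nat) \<Rightarrow> complex" where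
  "basis_vec k = (\<lambda>k'. if k' = k then 1 else 0)"

lemma comp_basis_eq_image: "comp_basis p n = basis_vec ` Conf p n"
  unfolding comp_basis_def basis_vec_def by auto

lemma qinner_basis_vec: "k \<in> Conf p n \<Longrightarrow> qinner p n (basis_vec k) v = v k"
  unfolding qinner_def basis_vec_def by (simp add: if_distrib[of "\<lambda>x. cnj x * _"] cong: if_cong)

lemma is_onb_comp_basis: "is_onb p n (comp_basis p n)"
proof -
  have inj: "inj basis_vec"
    by (rule injI) (metis basis_vec_def zero_neq_one)
  show ?thesis
    unfolding is_onb_def comp_basis_eq_image
  proof (intro conjI ballI)
    show "basis_vec ` Conf p n \<subseteq> state_space p n"
      unfolding state_space_def basis_vec_def by auto
    show "card (basis_vec ` Conf p n) = p ^ n"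
      using card_image[OF inj_on_subset[OF inj]] card_Conf by simp
    fix u v assume "u \<in> basis_vec ` Conf p n" "v \<in> basis_vec ` Conf p n"
    then obtain k k' where "k \<in> Conf p n" "u = basis_vec k" "v = basis_vec k'"
      by blast
    then show "qinner p n u v = (if u = v then 1 else 0)"
      by (simp add: qinner_basis_vec inj_eq[OF inj]) (simp add: basis_vec_def)
  qed simp
qed

lemma qinner_commute: "qinner p n v u = cnj (qinner p n u v)"
  unfolding qinner_def cnj_sum complex_cnj_mult complex_cnj_cnj by (rule sum.cong) (simp_all add: ac_simps)
lemma mutually_unbiased_swap:
  assumes "mutually_unbiased p n B1 B2"
  shows "mutually_unbiased p n B2 B1"
  unfolding mutually_unbiased_def
proof (intro conjI ballI)
  fix u v
  assume "u \<in> B2" "v \<in> B1"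
  then show "(cmod (qinner p n u v))\<^sup>2 = 1 / real (p ^ n)"
    using assms unfolding mutually_unbiased_def qinner_commute[of p n u v] complex_mod_cnj by blast
qed (use assms in \<open>simp_all add: mutually_unbiased_def\<close>)

lemma norm_graph_vec_squared:
  assumes p: "prime p" and k: "k \<in> Conf p n"
  shows "(cmod (graph_vec p n A m k))\<^sup>2 = 1 / real (p ^ n)"
proof -
  have "cmod (graph_vec p n A m k) = 1 / sqrt (real p ^ n)"
    using graph_vec_Conf[OF p k] by (simp add: norm_mult norm_divide)
  moreover have "p > 0"
    using p prime_gt_0_nat by blast
  ultimately show ?thesis
    by (simp add: power_divide)
qed

lemma mutually_unbiased_comp_graph:
  assumes p: "prime p"
  shows "mutually_unbiased p n (comp_basis p n) (graph_basis p n A)"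
  unfolding mutually_unbiased_def
proof (intro conjI is_onb_comp_basis is_onb_graph_basis[OF p] ballI)
  fix u v assume "u \<in> comp_basis p n" "v \<in> graph_basis p n A"
  then obtain k m where "k \<in> Conf p n" "u = basis_vec k" "v = graph_vec p n A m"
    unfolding comp_basis_eq_image graph_basis_eq_image by blast
  then show "(cmod (qinner p n u v))\<^sup>2 = 1 / real (p ^ n)"
    by (simp add: qinner_basis_vec norm_graph_vec_squared[OF p])
qed

section \<open>Mutually unbiased bases\<close>

lemma graph_phase_eq_quad_form:
  assumes "symmetric_on n A"
  shows "graph_phase p n A k
           = quad_form n (\<lambda>i j. int (A i j)) (\<lambda>i. - eps p * int (A i i)) (\<lambda>i. int (k i))"
proof -
  have "(\<Sum>i<n. \<Sum>j<n. int (A i j) * int (k i) * int (k j))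
      = (\<Sum>i<n. int (A i i) * int (k i) ^ 2) + (\<Sum>i<n. \<Sum>j\<in>{Suc i..<n}. 2 * int (A i j) * int (k i) * int (k j))"
    using assms unfolding sum_square_split_diagonal[of _ n] symmetric_on_def
    by (simp add: power2_eq_square mult_ac)
  then show ?thesis
    unfolding graph_phase_def quad_form_def
    by (simp add: algebra_simps sum.distrib sum_subtractf sum_negf)
qed

lemma even_prime_minus_eps:
  assumes "prime p"
  shows "even (int p - eps p)"
proof (cases "p = 2")
  case False
  then have "odd p"
    using assms prime_odd_nat prime_ge_2_nat[OF assms] by force
  then show ?thesis
    using False by (simp add: eps_def)
qed (simp add: eps_def)

lemma mutually_unbiased_graph_bases:
  assumes p: "prime p" and A: "symmetric_on n A" and B: "symmetric_on n B"
    and nondeg: "\<forall>h\<in>Conf p n. (\<forall>i<n. int p dvd (\<Sum>j<n. (int (B i j) - int (A i j)) * int (h j)))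
                   \<longrightarrow> (\<forall>i<n. h i = 0)"
  shows "mutually_unbiased p n (graph_basis p n A) (graph_basis p n B)"
  unfolding mutually_unbiased_def
proof (intro conjI is_onb_graph_basis[OF p] ballI)
  have p0: "p > 0"
    using p prime_gt_0_nat by blast
  define S where "S i j = int (B i j) - int (A i j)" for i j
  have S: "symmetric_on n S"
    using A B unfolding S_def symmetric_on_def by auto
  fix u v
  assume "u \<in> graph_basis p n A" "v \<in> graph_basis p n B"
  then obtain m m' where u: "u = graph_vec p n A m" and v: "v = graph_vec p n B m'"
    unfolding graph_basis_eq_image by blast
  define L where "L i = - eps p * S i i + 2 * (int (m' i) - int (m i))" for i
  have phase: "graph_phase p n B k - graph_phase p n A k + 2 * (\<Sum>i<n. (int (m' i) - int (m i)) * int (k i))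
      = quad_form n S L (\<lambda>i. int (k i))" for k
    unfolding graph_phase_eq_quad_form[OF A] graph_phase_eq_quad_form[OF B] quad_form_def S_def L_def
    by (simp add: algebra_simps sum.distrib sum_subtractf sum_distrib_left sum_negf)
  have "even (int p * S i i + L i)" for i
  proof -
    have "int p * S i i + L i = (int p - eps p) * S i i + 2 * (int (m' i) - int (m i))"
      unfolding L_def by (simp add: algebra_simps)
    then show ?thesis
      using even_prime_minus_eps[OF p] by simp
  qed
  then have gauss: "(cmod (\<Sum>k\<in>Conf p n. tau p (quad_form n S L (\<lambda>i. int (k i)))))\<^sup>2 = real p ^ n"
    using norm_gauss_sum_squared[OF p0 S _ nondeg[unfolded S_def[symmetric]]] by blast
  have "(cmod (qinner p n u v))\<^sup>2 = (1 / real p ^ n)\<^sup>2 * real p ^ n"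
    unfolding u v qinner_graph_vec[OF p] phase norm_mult norm_of_real power_mult_distrib gauss
    by simp
  also have "\<dots> = 1 / real (p ^ n)"
    using p0 by (simp add: power2_eq_square)
  finally show "(cmod (qinner p n u v))\<^sup>2 = 1 / real (p ^ n)" .
qed

lemma not_mutually_unbiased_self:
  assumes "p ^ n \<ge> 2"
  shows "\<not> mutually_unbiased p n B B"
proof
  assume mub: "mutually_unbiased p n B B"
  then have "card B = p ^ n"
    unfolding mutually_unbiased_def is_onb_def by simp
  then have "card B \<ge> 2"
    using assms by simp
  then have "B \<noteq> {}"
    by auto
  then obtain u where u: "u \<in> B"
    by blast
  then have "qinner p n u u = 1"
    using mub unfolding mutually_unbiased_def is_onb_def by simp
  moreover have "(cmod (qinner p n u u))\<^sup>2 = 1 / real (p ^ n)"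
    using mub u unfolding mutually_unbiased_def by simp
  ultimately have "real (p ^ n) = 1"
    by simp
  then show False
    using assms by linarith
qed

lemma complete_MUB_set_insert:
  assumes pn: "p ^ n \<ge> 2" and card: "card I = p ^ n"
    and C: "\<forall>i\<in>I. mutually_unbiased p n C (F i)"
    and F: "\<forall>i\<in>I. \<forall>j\<in>I. i \<noteq> j \<longrightarrow> mutually_unbiased p n (F i) (F j)"
  shows "complete_MUB_set p n (F ` I \<union> {C})"
proof -
  have "card I \<ge> 2"
    using card pn by simp
  then have "finite I" "I \<noteq> {}"
    by (auto intro: card_ge_0_finite)
  have inj: "inj_on F I"
    using F not_mutually_unbiased_self[OF pn] by (metis inj_onI)
  have "C \<notin> F ` I"
    using C not_mutually_unbiased_self[OF pn] by auto
  then have "card (F ` I \<union> {C}) = p ^ n + 1"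
    using card_image[OF inj] card \<open>finite I\<close> by simp
  moreover have "is_onb p n B" if "B \<in> F ` I \<union> {C}" for B
    using that C \<open>I \<noteq> {}\<close> unfolding mutually_unbiased_def by auto
  moreover have "mutually_unbiased p n B1 B2"
    if "B1 \<in> F ` I \<union> {C}" "B2 \<in> F ` I \<union> {C}" "B1 \<noteq> B2" for B1 B2
    using that C F by (auto intro: mutually_unbiased_swap)
  ultimately show ?thesis
    unfolding complete_MUB_set_def by blast
qed

lemma mutually_unbiased_poly_span:
  fixes Q :: "'p::prime_card mod_ring mat"
  assumes "Q \<in> carrier_mat n n" "transpose_mat Q = Q" "irreducible (char_poly Q)" "n \<ge> 1"
    and "A \<in> poly_span Q n" "B \<in> poly_span Q n" "A \<noteq> B"
  shows "mutually_unbiased CARD('p) n (graph_basis CARD('p) n (adj A)) (graph_basis CARD('p) n (adj B))"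
proof (rule mutually_unbiased_graph_bases[OF prime_card])
  show "symmetric_on n (adj A)" "symmetric_on n (adj B)"
    using adj_poly_span_symmetric assms by blast+
  show "\<forall>h\<in>Conf CARD('p) n. (\<forall>i<n. int CARD('p) dvd (\<Sum>j<n. (int (adj B i j) - int (adj A i j)) * int (h j)))
          \<longrightarrow> (\<forall>i<n. h i = 0)"
    using adj_diff_nondegenerate[OF assms(1,3,4,5,6,7)] by blast
qed

theorem mainTheorem4:
  fixes Q :: "'p::prime_card mod_ring mat" and n :: nat
  assumes "n \<ge> 1"
    and "Q \<in> carrier_mat n n"
    and "transpose_mat Q = Q"
    and "irreducible (char_poly Q)"
  shows "complete_MUB_set CARD('p) n
           ((\<lambda>A. graph_basis CARD('p) n (adj A)) ` poly_span Q n \<union> {comp_basis CARD('p) n})"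
proof (rule complete_MUB_set_insert)
  have "CARD('p) ^ 1 \<le> CARD('p) ^ n"
    using assms(1) by (intro power_increasing) auto
  then show "CARD('p) ^ n \<ge> 2"
    using prime_ge_2_nat[OF prime_card[where 'a='p]] by simp
  show "card (poly_span Q n) = CARD('p) ^ n"
    using card_poly_span[where 'a="'p mod_ring", OF assms(2) assms(4) assms(1)] by simp
  show "\<forall>A\<in>poly_span Q n. mutually_unbiased CARD('p) n (comp_basis CARD('p) n) (graph_basis CARD('p) n (adj A))"
    using mutually_unbiased_comp_graph[OF prime_card] by blast
  show "\<forall>A\<in>poly_span Q n. \<forall>B\<in>poly_span Q n. A \<noteq> B \<longrightarrow>
          mutually_unbiased CARD('p) n (graph_basis CARD('p) n (adj A)) (graph_basis CARD('p) n (adj B))"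
    using mutually_unbiased_poly_span assms by blast
qed

end
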